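(* Let $n \ge 2$ and suppose every maximal order $\Gamma$ in $\mathbb{Q}[\zeta_{2n}, j]$ with $\mathbb{Z}[\zeta_{2n}, j] \subseteq \Gamma$ satisfies $\Gamma_0^\times := \{\alpha \in \Gamma : \mathrm{nr}(\alpha) = 1\} \cong Q_{4n}$. Let $I \le \mathbb{Z}[\zeta_{2n}, j]$ be a left ideal, and suppose there exist $u_1, \dots, u_l \in \mathbb{Q}[\zeta_{2n}, j]$ with $\mathrm{nr}(u_i) = 1$ and $I u_i \subseteq I$ for $1 \le i \le l$, such that the group $\langle u_1, \dots, u_l \rangle$ is not isomorphic to a subgroup of $Q_{4n}$. Then $I$ is not a free $\mathbb{Z}[\zeta_{2n}, j]$-module.
   Context: $\zeta_d = e^{2\pi i/d}$; $\mathbb{Z}[\zeta_d, j]$ denotes the subring of the real quaternions $\mathbb{R}[i,j]$ generated by $\zeta_d$ (viewed in $\mathbb{R}+\mathbb{R}i \cong \mathbb{C}$) and $j$, and $\mathbb{Q}[\zeta_d, j] = \mathbb{Q}\otimes\mathbb{Z}[\zeta_d,j]$, a quaternion algebra over $\mathbb{Q}(\zeta_d + \zeta_d^{-1})$. $\mathrm{nr}$ denotes the reduced norm. $Q_{4n}$ is the quaternion group of order $4n$. *)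

theory Defs
  imports "HOL-Analysis.Analysis" "HOL-Algebra.Algebra"
begin

text \<open>A real quaternion is written uniquely as a + b j with a, b complex numbers
  (complex numbers viewed inside R + R i), where j^2 = -1 and j z = cnj z j.\<close>

datatype quat = Quat (cpart: complex) (jpart: complex)

instantiation quat :: ring_1
begin
definition "0 = Quat 0 0"
definition "1 = Quat 1 0"
definition "p + q = Quat (cpart p + cpart q) (jpart p + jpart q)"
definition "p - q = Quat (cpart p - cpart q) (jpart p - jpart q)"
definition "- p = Quat (- cpart p) (- jpart p)"
definition "p * q = Quat (cpart p * cpart q - jpart p * cnj (jpart q))
                         (cpart p * jpart q + jpart p * cnj (cpart q))"
instance
  by standard
     (auto simp: zero_quat_def one_quat_def plus_quat_def minus_quat_def
        uminus_quat_def times_quat_def algebra_simps quat.expand)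
end

definition cq :: "complex \<Rightarrow> quat" where "cq z = Quat z 0"
definition jq :: quat where "jq = Quat 0 1"

definition nr :: "quat \<Rightarrow> real" where
  "nr q = (cmod (cpart q))\<^sup>2 + (cmod (jpart q))\<^sup>2"

definition zeta :: "nat \<Rightarrow> complex" where "zeta d = cis (2 * pi / real d)"

inductive_set Zring :: "nat \<Rightarrow> quat set" for d where
  one: "1 \<in> Zring d"
| zeta: "cq (zeta d) \<in> Zring d"
| j: "jq \<in> Zring d"
| add: "x \<in> Zring d \<Longrightarrow> y \<in> Zring d \<Longrightarrow> x + y \<in> Zring d"
| neg: "x \<in> Zring d \<Longrightarrow> - x \<in> Zring d"
| mult: "x \<in> Zring d \<Longrightarrow> y \<in> Zring d \<Longrightarrow> x * y \<in> Zring d"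

text \<open>Q \<otimes> Z[zeta_d,j], realised as its (isomorphic) image in the real quaternions,
  i.e. the Q-span of Z[zeta_d,j].\<close>
definition Qalg :: "nat \<Rightarrow> quat set" where
  "Qalg d = {cq (of_real (1 / real m)) * x | m x. m > 0 \<and> x \<in> Zring d}"

definition subring_q :: "quat set \<Rightarrow> bool" where
  "subring_q R \<longleftrightarrow> 1 \<in> R \<and> (\<forall>x\<in>R. \<forall>y\<in>R. x + y \<in> R \<and> - x \<in> R \<and> x * y \<in> R)"

definition fin_gen_Z :: "quat set \<Rightarrow> bool" where
  "fin_gen_Z M \<longleftrightarrow> (\<exists>S. finite S \<and> M = {\<Sum>s\<in>S. of_int (c s) * s | c. True})"

text \<open>A (Z-)order in the Q-algebra A: a subring that is a finitely generated
  Z-module and contains a Q-basis of A (Q \<Gamma> = A).\<close>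
definition is_order :: "quat set \<Rightarrow> quat set \<Rightarrow> bool" where
  "is_order A \<Gamma> \<longleftrightarrow> \<Gamma> \<subseteq> A \<and> subring_q \<Gamma> \<and> fin_gen_Z \<Gamma> \<and>
     (\<forall>a\<in>A. \<exists>m::int. m > 0 \<and> of_int m * a \<in> \<Gamma>)"

definition maximal_order :: "quat set \<Rightarrow> quat set \<Rightarrow> bool" where
  "maximal_order A \<Gamma> \<longleftrightarrow> is_order A \<Gamma> \<and> (\<forall>\<Gamma>'. is_order A \<Gamma>' \<and> \<Gamma> \<subseteq> \<Gamma>' \<longrightarrow> \<Gamma>' = \<Gamma>)"

definition unitq :: "quat monoid" where
  "unitq = \<lparr>carrier = {q. nr q = 1}, mult = (*), one = 1\<rparr>"

definition norm_one_group :: "quat set \<Rightarrow> quat monoid" where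
  "norm_one_group \<Gamma> = unitq\<lparr>carrier := {\<alpha> \<in> \<Gamma>. nr \<alpha> = 1}\<rparr>"

text \<open>The quaternion (binary dihedral) group Q_{4n} of order 4n, realised as the
  subgroup of unit quaternions generated by zeta_{2n} and j.\<close>
definition Q4 :: "nat \<Rightarrow> quat monoid" where
  "Q4 n = unitq\<lparr>carrier := {cq (zeta (2*n) ^ k) | k. k < 2*n}
                          \<union> {cq (zeta (2*n) ^ k) * jq | k. k < 2*n}\<rparr>"

definition left_ideal :: "quat set \<Rightarrow> quat set \<Rightarrow> bool" where
  "left_ideal R I \<longleftrightarrow> I \<subseteq> R \<and> 0 \<in> I \<and>
     (\<forall>x\<in>I. \<forall>y\<in>I. x + y \<in> I \<and> - x \<in> I) \<and> (\<forall>r\<in>R. \<forall>x\<in>I. r * x \<in> I)"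

definition free_left_module :: "quat set \<Rightarrow> quat set \<Rightarrow> bool" where
  "free_left_module R M \<longleftrightarrow> (\<exists>B \<subseteq> M.
     (\<forall>F c. finite F \<and> F \<subseteq> B \<and> (\<forall>b\<in>F. c b \<in> R) \<and> (\<Sum>b\<in>F. c b * b) = 0
            \<longrightarrow> (\<forall>b\<in>F. c b = 0)) \<and>
     (\<forall>x\<in>M. \<exists>F c. finite F \<and> F \<subseteq> B \<and> (\<forall>b\<in>F. c b \<in> R) \<and> x = (\<Sum>b\<in>F. c b * b)))"

end

theory Submission
  imports Defs "HOL-Computational_Algebra.Computational_Algebra"
begin

text \<open>A free left ideal \<open>I\<close> of \<open>\<Lambda> = \<int>[\<zeta>\<^sub>2\<^sub>n, j]\<close> is principal, \<open>I = \<Lambda> b\<close>, since any two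
  quaternions satisfy a nontrivial \<open>\<Lambda>\<close>-linear relation. Conjugation by \<open>b\<close> then embeds the group
  generated by the \<open>u\<^sub>i\<close> into \<open>\<Lambda>\<^sub>0\<^sup>\<times>\<close>, and \<open>\<Lambda>\<^sub>0\<^sup>\<times> = Q\<^sub>4\<^sub>n\<close>: for
  \<open>P(\<zeta>) + Q(\<zeta>) j\<close> of norm one, \<open>|P(\<zeta>)|\<^sup>2 + |Q(\<zeta>)|\<^sup>2 = 1\<close> is an integer polynomial
  relation in \<open>\<zeta>\<close> and therefore holds at every Galois conjugate of \<open>\<zeta>\<close>. By Kronecker's
  theorem \<open>P(\<zeta>)\<close> and \<open>Q(\<zeta>)\<close> are zero or roots of unity, so one of them vanishes and the
  other is a root of unity in \<open>\<int>[\<zeta>\<^sub>2\<^sub>n]\<close>, hence a power of \<open>\<zeta>\<^sub>2\<^sub>n\<close>.\<close>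

hide_const (open) Polynomials.degree Polynomials.lead_coeff up_ring.monom up_ring.coeff
  module.smult Divisibility.prime

lemma map_poly_of_int_add [simp]:
  "map_poly (of_int :: int \<Rightarrow> 'a::comm_ring_1) (p + q) = map_poly of_int p + map_poly of_int q"
  by (rule poly_eqI) (simp add: coeff_map_poly)

lemma map_poly_of_int_diff [simp]:
  "map_poly (of_int :: int \<Rightarrow> 'a::comm_ring_1) (p - q) = map_poly of_int p - map_poly of_int q"
  by (rule poly_eqI) (simp add: coeff_map_poly)

lemma map_poly_of_int_uminus [simp]:
  "map_poly (of_int :: int \<Rightarrow> 'a::comm_ring_1) (- p) = - map_poly of_int p"
  by (rule poly_eqI) (simp add: coeff_map_poly)

lemma map_poly_of_int_mult [simp]:
  "map_poly (of_int :: int \<Rightarrow> 'a::comm_ring_1) (p * q) = map_poly of_int p * map_poly of_int q"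
  by (rule poly_eqI) (simp add: coeff_map_poly coeff_mult)

lemma map_poly_of_int_power [simp]:
  "map_poly (of_int :: int \<Rightarrow> 'a::comm_ring_1) (p ^ k) = map_poly of_int p ^ k"
  by (induction k) simp_all

lemma map_poly_of_int_pcompose [simp]:
  "map_poly (of_int :: int \<Rightarrow> 'a::comm_ring_1) (pcompose p q) =
     pcompose (map_poly of_int p) (map_poly of_int q)"
  by (induction p) (simp_all add: map_poly_pCons pcompose_pCons)

lemma map_poly_of_int_pderiv [simp]:
  "map_poly (of_int :: int \<Rightarrow> 'a::idom) (pderiv p) = pderiv (map_poly of_int p)"
  by (rule poly_eqI) (simp add: coeff_map_poly coeff_pderiv)

lemma map_poly_of_int_monom [simp]:
  "map_poly (of_int :: int \<Rightarrow> 'a::comm_ring_1) (monom c k) = monom (of_int c) k"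
  by (simp add: map_poly_monom)

lemmas [simp] = poly_monom poly_pcompose

abbreviation ipoly :: "int poly \<Rightarrow> complex \<Rightarrow> complex" where
  "ipoly P x \<equiv> poly (map_poly of_int P) x"

lemma ipoly_smult [simp]: "ipoly (smult c P) x = of_int c * ipoly P x"
  by (simp add: map_poly_smult)

lemma ipoly_pCons [simp]: "ipoly (pCons a P) x = of_int a + x * ipoly P x"
  by (simp add: map_poly_pCons)

lemma ipoly_of_nat [simp]: "ipoly (of_nat k) x = of_nat k"
  by (simp add: of_nat_poly)

lemma ipoly_cnj: "ipoly P (cnj z) = cnj (ipoly P z)"
  by (simp add: poly_cnj map_poly_map_poly o_def)

lemma ipoly_dvd_root: "P dvd R \<Longrightarrow> ipoly P x = 0 \<Longrightarrow> ipoly R x = 0"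
  by (elim dvdE) simp

lemma lead_coeff_monom_minus_one:
  assumes "L > 0"
  shows "lead_coeff (monom 1 L - 1 :: int poly) = 1"
proof -
  have eq: "monom 1 L - 1 = monom 1 L + [:-1 :: int:]" by (simp add: one_pCons)
  have "degree (monom 1 L + [:-1 :: int:]) = L"
    using assms by (subst degree_add_eq_left) (simp_all add: degree_monom_eq)
  then show ?thesis using assms by (simp only: eq) (simp add: coeff_pCons split: nat.split)
qed

lemma monic_int_poly_division:
  fixes g P :: "int poly"
  assumes "lead_coeff g = 1"
  obtains q r where "P = g * q + r" "r = 0 \<or> degree r < degree g"
proof -
  have gne: "g \<noteq> 0" using assms by auto
  obtain q r where qr: "pseudo_divmod P g = (q, r)" by (cases "pseudo_divmod P g")
  have "smult (coeff g (degree g) ^ (Suc (degree P) - degree g)) P = g * q + r"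
    using pseudo_divmod(1)[OF gne qr] .
  then have "P = g * q + r" using assms by simp
  then show ?thesis using that pseudo_divmod(2)[OF gne qr] by blast
qed

lemma primitive_dvd_smult_cancel:
  fixes g R :: "int poly"
  assumes "content g = 1" "g dvd smult a R" "a \<noteq> 0"
  shows "g dvd R"
proof -
  have "fract_poly g dvd smult (to_fract a) (fract_poly R)"
    using fract_poly_dvd[OF assms(2)] by simp
  then have "fract_poly g dvd fract_poly R"
    using assms(3) by (simp add: dvd_smult_iff)
  then show ?thesis using fract_poly_dvdD assms(1) by blast
qed

section \<open>Minimal polynomials and conjugates\<close>

definition int_min_poly :: "complex \<Rightarrow> int poly \<Rightarrow> bool" where
  "int_min_poly x g \<longleftrightarrow> g \<noteq> 0 \<and> ipoly g x = 0 \<and> (\<forall>R. ipoly R x = 0 \<longrightarrow> g dvd R)"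

definition alg_conjugates :: "complex \<Rightarrow> complex set" where
  "alg_conjugates x = {z. \<forall>R. ipoly R x = 0 \<longrightarrow> ipoly R z = 0}"

lemma alg_conjugates_trans: "y \<in> alg_conjugates x \<Longrightarrow> z \<in> alg_conjugates y \<Longrightarrow> z \<in> alg_conjugates x"
  by (simp add: alg_conjugates_def)

lemma int_min_poly_exists:
  assumes "R0 \<noteq> 0" "ipoly R0 x = 0"
  obtains g where "int_min_poly x g"
proof -
  define annihilates where "annihilates = (\<lambda>R. R \<noteq> 0 \<and> ipoly R x = 0)"
  obtain g0 where g0: "annihilates g0" and least: "\<And>R. annihilates R \<Longrightarrow> degree g0 \<le> degree R"
    using ex_has_least_nat[of annihilates R0 degree] assms annihilates_def by blast
  define g where "g = primitive_part g0"
  have g0_eq: "g0 = smult (content g0) g" by (simp add: g_def)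
  have "content g0 \<noteq> 0" using g0 by (simp add: annihilates_def)
  moreover have "ipoly g0 x = of_int (content g0) * ipoly g x"
    by (subst g0_eq) simp
  ultimately have g: "annihilates g" "degree g = degree g0" "content g = 1"
    using g0 by (auto simp: annihilates_def g_def)
  have "g dvd R" if R: "ipoly R x = 0" for R
  proof -
    have g_ne: "g \<noteq> 0" using g by (simp add: annihilates_def)
    obtain a q where aq: "a \<noteq> 0" "smult a R = g * q + pseudo_mod R g"
      using pseudo_mod(1)[OF g_ne] by blast
    have "ipoly (pseudo_mod R g) x = 0"
      using arg_cong[OF aq(2), of "\<lambda>P. ipoly P x"] R g(1) by (simp add: annihilates_def)
    then have "pseudo_mod R g = 0"
      using pseudo_mod(2)[OF g_ne] least g(2) annihilates_def by (metis leD)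
    then have "g dvd smult a R" using aq by simp
    then show ?thesis using primitive_dvd_smult_cancel g(3) aq(1) by blast
  qed
  then show ?thesis using that g(1) unfolding int_min_poly_def annihilates_def by blast
qed

lemma int_min_poly_degree_pos:
  assumes "int_min_poly x g"
  shows "degree g > 0"
proof (rule ccontr)
  assume "\<not> degree g > 0"
  then obtain c where "g = [:c:]" by (metis degree_eq_zeroE neq0_conv)
  then show False using assms by (auto simp: int_min_poly_def)
qed

lemma alg_conjugates_eq_roots:
  assumes "int_min_poly x g"
  shows "alg_conjugates x = {z. ipoly g z = 0}"
  using assms ipoly_dvd_root by (auto simp: int_min_poly_def alg_conjugates_def)

lemma monic_int_min_poly_root_of_unity:
  assumes "x ^ L = 1" "L > 0"
  obtains g where "int_min_poly x g" "lead_coeff g = 1"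
proof -
  have rel: "ipoly (monom 1 L - 1) x = 0" using assms by simp
  have "monom 1 L - 1 \<noteq> (0 :: int poly)"
    using lead_coeff_monom_minus_one[OF assms(2)] by (metis leading_coeff_0_iff zero_neq_one)
  then obtain g where g: "int_min_poly x g" using rel by (rule int_min_poly_exists)
  then have "g dvd monom 1 L - 1" using rel by (simp add: int_min_poly_def)
  then obtain k where "monom 1 L - 1 = g * k" by (elim dvdE)
  then have "lead_coeff g * lead_coeff k = 1"
    using lead_coeff_monom_minus_one[OF assms(2)] by (metis lead_coeff_mult)
  then have "lead_coeff g = 1 \<or> lead_coeff (- g) = 1" using zmult_eq_1_iff by auto
  moreover have "int_min_poly x (- g)" using g by (auto simp: int_min_poly_def)
  ultimately show ?thesis using that g by blast
qed

lemma alg_conjugates_root_of_unity: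
  assumes "x ^ L = 1" "z \<in> alg_conjugates x"
  shows "z ^ L = 1"
proof -
  have "ipoly (monom 1 L - 1) x = 0" using assms(1) by simp
  then have "ipoly (monom 1 L - 1) z = 0" using assms(2) unfolding alg_conjugates_def by blast
  then show ?thesis by simp
qed

section \<open>Galois conjugates of roots of unity\<close>

lemma prime_dvd_power_add:
  fixes A B :: "'a::comm_ring_1"
  assumes p: "prime p"
  shows "of_nat p dvd (A + B) ^ p - A ^ p - B ^ p"
proof -
  have "{..p} = insert 0 (insert p {1..<p})" using prime_gt_0_nat[OF p] by auto
  then have "(A + B) ^ p - A ^ p - B ^ p = (\<Sum>k\<in>{1..<p}. of_nat (p choose k) * A ^ k * B ^ (p - k))"
    using prime_gt_0_nat[OF p] by (simp add: binomial_ring algebra_simps)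
  also have "of_nat p dvd \<dots>"
  proof (rule dvd_sum)
    fix k assume "k \<in> {1..<p}"
    then have "p dvd p choose k" using p by (intro dvd_choose_prime) auto
    then show "of_nat p dvd of_nat (p choose k) * A ^ k * B ^ (p - k)"
      by (intro dvd_mult2) (metis dvd_def of_nat_mult)
  qed
  finally show ?thesis .
qed

lemma prime_dvd_power_diff_self:
  fixes a :: int
  assumes p: "prime p"
  shows "int p dvd a ^ p - a"
proof (induction a rule: int_induct[where k = 0])
  case base
  then show ?case using prime_gt_0_nat[OF p] by (simp add: power_0_left)
next
  case (step1 i)
  have "(i + 1) ^ p - (i + 1) = ((i + 1) ^ p - i ^ p - 1 ^ p) + (i ^ p - i)" by simp
  then show ?case using prime_dvd_power_add[OF p, of i 1] step1(2) by (simp only: dvd_add)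
next
  case (step2 i)
  have "(i - 1) ^ p - (i - 1) = (i ^ p - i) - (((i - 1) + 1) ^ p - (i - 1) ^ p - 1 ^ p)" by simp
  then show ?case using step2(2) prime_dvd_power_add[OF p, of "i - 1" 1] by (simp only: dvd_diff)
qed

lemma prime_dvd_power_diff_pcompose:
  fixes P :: "int poly"
  assumes p: "prime p"
  shows "of_nat p dvd P ^ p - pcompose P (monom 1 p)"
proof (induction P)
  case 0
  then show ?case using prime_gt_0_nat[OF p] by (simp add: power_0_left)
next
  case (pCons a P)
  define A where "A = [:a:]"
  define B where "B = monom 1 1 * P"
  have "pCons a P = A + B" by (simp add: A_def B_def monom_Suc monom_0 one_pCons)
  moreover have "pcompose (pCons a P) (monom 1 p) = A + monom 1 p * pcompose P (monom 1 p)"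
    by (simp add: A_def pcompose_pCons)
  moreover have "B ^ p = monom 1 p * P ^ p"
    by (simp add: B_def power_mult_distrib monom_power)
  ultimately have split: "pCons a P ^ p - pcompose (pCons a P) (monom 1 p) =
      ((A + B) ^ p - A ^ p - B ^ p) + (A ^ p - A) + monom 1 p * (P ^ p - pcompose P (monom 1 p))"
    by (simp add: algebra_simps)
  obtain w where w: "a ^ p - a = int p * w" using prime_dvd_power_diff_self[OF p, of a] by (elim dvdE)
  have "A ^ p - A = [:a ^ p - a:]" by (simp add: A_def poly_const_pow)
  also have "\<dots> = of_nat p * [:w:]" by (simp add: w of_nat_poly)
  finally have "of_nat p dvd A ^ p - A" by (metis dvd_triv_left)
  then show ?case
    unfolding split using prime_dvd_power_add[OF p] pCons.IH by (intro dvd_add) auto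
qed

lemma of_int_eq_mult_ipoly_imp_dvd:
  assumes g: "int_min_poly x g" "lead_coeff g = 1"
    and eq: "of_int c = of_int a * ipoly T x"
  shows "a dvd c"
proof -
  obtain q r where qr: "T = g * q + r" "r = 0 \<or> degree r < degree g"
    using monic_int_poly_division[OF g(2)] by blast
  define D where "D = [:a:] * r - [:c:]"
  have "ipoly D x = 0" using eq qr(1) g(1) by (simp add: D_def int_min_poly_def)
  moreover have "degree D < degree g"
  proof -
    have "degree D \<le> degree r"
      unfolding D_def by (rule order.trans[OF degree_diff_le_max]) (auto intro: degree_mult_le)
    then show ?thesis using qr(2) int_min_poly_degree_pos[OF g(1)] by auto
  qed
  ultimately have "D = 0" using g(1) by (metis dvd_imp_degree_le int_min_poly_def leD)
  then have "coeff ([:a:] * r) 0 = c" by (simp add: D_def)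
  then show ?thesis by (simp add: coeff_mult_0) (metis dvd_triv_left)
qed

lemma ipoly_pderiv_unity_poly_at_root:
  assumes "monom 1 L - 1 = g * k" "ipoly g x = 0"
  shows "of_nat L * x ^ (L - 1) = ipoly k x * ipoly (pderiv g) x"
proof -
  have "ipoly (pderiv (monom 1 L - 1)) x = of_nat L * x ^ (L - 1)"
    by (simp add: pderiv_diff pderiv_monom)
  then show ?thesis using assms by (simp add: pderiv_mult)
qed

lemma ipoly_power_prime:
  assumes "prime p"
  obtains W where "ipoly h x ^ p = ipoly h (x ^ p) + of_nat p * ipoly W x"
proof -
  obtain W where "h ^ p - pcompose h (monom 1 p) = of_nat p * W"
    using prime_dvd_power_diff_pcompose[OF assms, of h] by (elim dvdE)
  from arg_cong[OF this, of "\<lambda>P. ipoly P x"] show ?thesis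
    by (intro that[of W]) (simp add: algebra_simps)
qed

text \<open>Dedekind's argument: if the minimal polynomials \<open>g\<close> of \<open>x\<close> and \<open>h\<close> of \<open>x\<^sup>p\<close> were
  different, \<open>g h\<close> would divide \<open>X\<^sup>L - 1\<close>, so \<open>h(x)\<close> divides \<open>L x\<^sup>L\<^sup>-\<^sup>1\<close>; but
  \<open>h(x)\<^sup>p \<equiv> h(x\<^sup>p) = 0\<close> modulo \<open>p\<close>, which forces \<open>p\<close> to divide \<open>L\<close>.\<close>
lemma pow_prime_in_alg_conjugates:
  assumes x: "x ^ L = 1" and L: "L > 0" and p: "prime p" and pL: "\<not> p dvd L"
  shows "x ^ p \<in> alg_conjugates x"
proof -
  obtain g where g: "int_min_poly x g" "lead_coeff g = 1"
    using monic_int_min_poly_root_of_unity[OF x L] .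
  have xp: "(x ^ p) ^ L = 1" using x by (metis power_mult power_one mult.commute)
  obtain h where h: "int_min_poly (x ^ p) h" "lead_coeff h = 1"
    using monic_int_min_poly_root_of_unity[OF xp L] .
  have "ipoly g (x ^ p) = 0"
  proof (rule ccontr)
    assume gxp: "ipoly g (x ^ p) \<noteq> 0"
    have "g dvd monom 1 L - 1" using g(1) x by (simp add: int_min_poly_def)
    then obtain k1 where k1: "monom 1 L - 1 = g * k1" by (elim dvdE)
    have "ipoly k1 (x ^ p) = 0"
      using arg_cong[OF k1, of "\<lambda>P. ipoly P (x ^ p)"] xp gxp by simp
    then have "h dvd k1" using h(1) by (simp add: int_min_poly_def)
    then obtain k where k: "k1 = h * k" by (elim dvdE)
    have deriv: "of_nat L * x ^ (L - 1) = ipoly h x * ipoly k x * ipoly (pderiv g) x"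
      using ipoly_pderiv_unity_poly_at_root[OF k1] g(1) k by (simp add: int_min_poly_def)
    obtain W where "ipoly h x ^ p = ipoly h (x ^ p) + of_nat p * ipoly W x"
      using ipoly_power_prime[OF p] .
    then have hp: "ipoly h x ^ p = of_nat p * ipoly W x" using h(1) by (simp add: int_min_poly_def)
    have "(L - 1) * p + p = L * p" using L by (cases L) auto
    then have "x ^ ((L - 1) * p) * x ^ p = 1" using x by (metis power_add power_mult power_one)
    then have "of_nat (L ^ p) = (of_nat L * x ^ (L - 1)) ^ p * x ^ p"
      by (simp add: power_mult_distrib power_mult mult.assoc)
    also have "\<dots> = of_int (int p) * ipoly (W * (k * pderiv g) ^ p * monom 1 p) x"
      unfolding deriv by (simp add: power_mult_distrib hp)
    finally have "int p dvd int (L ^ p)"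
      using of_int_eq_mult_ipoly_imp_dvd[OF g] by (metis of_int_of_nat_eq)
    then have "p dvd L" using p prime_dvd_power by (metis of_nat_dvd_iff)
    then show False using pL by contradiction
  qed
  then show ?thesis using alg_conjugates_eq_roots[OF g(1)] by simp
qed

lemma pow_coprime_in_alg_conjugates:
  assumes x: "x ^ L = 1" and L: "L > 0"
  shows "coprime k L \<Longrightarrow> x ^ k \<in> alg_conjugates x"
proof (induction k rule: less_induct)
  case (less k)
  consider "k = 0" | "k = 1" | "k > 1" by linarith
  then show ?case
  proof cases
    case 1
    then have "x = 1" using less.prems x by simp
    then show ?thesis using 1 by (simp add: alg_conjugates_def)
  next
    case 2
    then show ?thesis by (simp add: alg_conjugates_def)
  next
    case 3
    then obtain p k' where p: "prime p" "k = p * k'" by (metis prime_factor_nat dvdE less_irrefl)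
    then have "k' > 0" using 3 by (cases k') auto
    then have "k' < k" "coprime k' L" using p less.prems prime_gt_1_nat[OF p(1)] by auto
    then have "x ^ k' \<in> alg_conjugates x" by (rule less.IH)
    moreover have "\<not> p dvd L"
    proof
      assume "p dvd L"
      then have "p = 1" using coprime_common_divisor_nat[OF less.prems] p(2) by simp
      then show False using p(1) by simp
    qed
    moreover have "(x ^ k') ^ L = 1" using x by (metis power_mult power_one mult.commute)
    ultimately have "(x ^ k') ^ p \<in> alg_conjugates (x ^ k')"
      using L p(1) by (intro pow_prime_in_alg_conjugates)
    with \<open>x ^ k' \<in> alg_conjugates x\<close> show ?thesis
      using p(2) by (metis alg_conjugates_trans power_mult mult.commute)
  qed
qed

lemma card_alg_conjugates_root_of_unity:
  assumes x: "x ^ L = 1" and L: "L > 0" and g: "int_min_poly x g"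
  shows "finite (alg_conjugates x)" "card (alg_conjugates x) = degree g"
proof -
  define gc where "gc = map_poly (of_int :: int \<Rightarrow> complex) g"
  have roots: "alg_conjugates x = {z. poly gc z = 0}"
    using alg_conjugates_eq_roots[OF g] by (simp add: gc_def)
  have "gc \<noteq> 0" using g by (simp add: gc_def int_min_poly_def map_poly_eq_0_iff)
  then show "finite (alg_conjugates x)" unfolding roots by (rule poly_roots_finite)
  have "g dvd monom 1 L - 1" using g x by (simp add: int_min_poly_def)
  then obtain k where k: "monom 1 L - 1 = g * k" by (elim dvdE)
  have "rsquarefree gc"
    unfolding rsquarefree_roots
  proof (intro allI notI)
    fix a assume a: "poly gc a = 0 \<and> poly (pderiv gc) a = 0"
    then have "a \<in> alg_conjugates x" using roots by simp
    then have "a ^ L = 1" by (rule alg_conjugates_root_of_unity[OF x])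
    then have "a \<noteq> 0" using L by (metis power_0_left zero_neq_one gr_implies_not0)
    have "of_nat L * a ^ (L - 1) = 0"
      using ipoly_pderiv_unity_poly_at_root[OF k, of a] a by (simp add: gc_def)
    then show False using \<open>a \<noteq> 0\<close> L by simp
  qed
  then have "smult (lead_coeff gc) (\<Prod>z | poly gc z = 0. [:-z, 1:]) = gc"
    by (rule complex_poly_decompose_rsquarefree)
  then have "degree gc = degree (\<Prod>z | poly gc z = 0. [:-z, 1:])"
    by (metis \<open>gc \<noteq> 0\<close> degree_smult_eq leading_coeff_0_iff)
  also have "\<dots> = card {z. poly gc z = 0}" by (subst degree_prod_eq_sum_degree) auto
  finally show "card (alg_conjugates x) = degree g" using roots by (simp add: gc_def degree_map_poly)
qed

section \<open>Kronecker's theorem\<close>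

definition lagrange_basis :: "'a::field set \<Rightarrow> 'a \<Rightarrow> 'a poly" where
  "lagrange_basis A r = smult (inverse (\<Prod>s\<in>A - {r}. r - s)) (\<Prod>s\<in>A - {r}. [:-s, 1:])"

lemma poly_lagrange_basis:
  assumes "finite A" "r \<in> A" "z \<in> A"
  shows "poly (lagrange_basis A r) z = (if z = r then 1 else 0)"
proof -
  have "(\<Prod>s\<in>A - {r}. r - s) \<noteq> 0" using assms(1) by simp
  moreover have "z \<noteq> r \<Longrightarrow> (\<Prod>s\<in>A - {r}. z - s) = 0" using assms by (intro prod_zero) auto
  ultimately show ?thesis by (simp add: lagrange_basis_def poly_prod)
qed

lemma degree_lagrange_basis:
  assumes "finite A" "r \<in> A"
  shows "degree (lagrange_basis A r) \<le> card A - 1"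
proof -
  have "degree (\<Prod>s\<in>A - {r}. [:-s, 1:]) \<le> (\<Sum>s\<in>A - {r}. degree [:-s, 1:])"
    using degree_prod_sum_le[of "A - {r}" "\<lambda>s. [:-s, 1:]"] assms(1) by (simp add: o_def)
  also have "\<dots> = card A - 1" using assms by simp
  finally show ?thesis unfolding lagrange_basis_def by (meson degree_smult_le order_trans)
qed

lemma lagrange_interpolation:
  fixes P :: "'a::field poly"
  assumes A: "finite A" and deg: "degree P < card A"
  shows "P = (\<Sum>r\<in>A. smult (poly P r) (lagrange_basis A r))"
proof (rule ccontr)
  define D where "D = P - (\<Sum>r\<in>A. smult (poly P r) (lagrange_basis A r))"
  assume "P \<noteq> (\<Sum>r\<in>A. smult (poly P r) (lagrange_basis A r))"
  then have "D \<noteq> 0" by (simp add: D_def)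
  have "degree (\<Sum>r\<in>A. smult (poly P r) (lagrange_basis A r)) \<le> card A - 1"
    using degree_lagrange_basis[OF A] by (intro degree_sum_le A) (meson degree_smult_le order_trans)
  then have "degree D < card A"
    using deg degree_diff_le_max[of P "\<Sum>r\<in>A. smult (poly P r) (lagrange_basis A r)"]
    unfolding D_def by arith
  moreover have "A \<subseteq> {z. poly D z = 0}"
  proof
    fix z assume z: "z \<in> A"
    have "poly (\<Sum>r\<in>A. smult (poly P r) (lagrange_basis A r)) z = (\<Sum>r\<in>A. if r = z then poly P r else 0)"
      by (auto simp: poly_sum poly_lagrange_basis[OF A _ z] intro!: sum.cong)
    then show "z \<in> {z. poly D z = 0}" using z A by (simp add: D_def)
  qed
  then have "card A \<le> card {z. poly D z = 0}"
    using poly_roots_finite[OF \<open>D \<noteq> 0\<close>] by (rule card_mono[rotated])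
  also have "\<dots> \<le> degree D" using card_poly_roots_bound[OF \<open>D \<noteq> 0\<close>] .
  finally show False using \<open>degree D < card A\<close> by simp
qed

lemma norm_coeff_le_lagrange:
  fixes P :: "'a::real_normed_field poly"
  assumes "finite A" "degree P < card A" "\<forall>r\<in>A. norm (poly P r) \<le> 1"
  shows "norm (coeff P i) \<le> (\<Sum>r\<in>A. norm (coeff (lagrange_basis A r) i))"
proof -
  have "coeff P i = (\<Sum>r\<in>A. poly P r * coeff (lagrange_basis A r) i)"
    by (subst lagrange_interpolation[OF assms(1,2)]) (simp add: coeff_sum)
  also have "norm \<dots> \<le> (\<Sum>r\<in>A. norm (poly P r) * norm (coeff (lagrange_basis A r) i))"
    by (rule norm_sum[THEN order.trans]) (simp add: norm_mult)
  also have "\<dots> \<le> (\<Sum>r\<in>A. norm (coeff (lagrange_basis A r) i))"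
    using assms(3) by (intro sum_mono) (simp add: mult_left_le_one_le)
  finally show ?thesis .
qed

lemma finite_int_polys_bounded:
  "finite {P :: int poly. degree P < d \<and> (\<forall>i. \<bar>coeff P i\<bar> \<le> C)}"
proof (rule finite_subset)
  show "{P :: int poly. degree P < d \<and> (\<forall>i. \<bar>coeff P i\<bar> \<le> C)} \<subseteq>
      Poly ` {xs. set xs \<subseteq> {-C..C} \<and> length xs = d}"
  proof clarify
    fix P :: "int poly" assume P: "degree P < d" "\<forall>i. \<bar>coeff P i\<bar> \<le> C"
    have "P = Poly (map (coeff P) [0..<d])"
      using P by (intro poly_eqI) (auto simp: nth_default_def coeff_eq_0)
    moreover have "coeff P i \<in> {-C..C}" for i using P(2)[rule_format, of i] by (simp add: abs_le_iff)
    then have "set (map (coeff P) [0..<d]) \<subseteq> {-C..C}" by auto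
    ultimately show "P \<in> Poly ` {xs. set xs \<subseteq> {-C..C} \<and> length xs = d}" by force
  qed
qed (simp add: finite_lists_length_eq)

lemma finite_values_bounded_on_conjugates:
  assumes x: "x ^ L = 1" and L: "L > 0"
  shows "finite {ipoly P x | P. \<forall>z\<in>alg_conjugates x. cmod (ipoly P z) \<le> 1}"
proof -
  obtain g where g: "int_min_poly x g" "lead_coeff g = 1" using monic_int_min_poly_root_of_unity[OF x L] .
  define A where "A = alg_conjugates x"
  have A: "finite A" "card A = degree g"
    unfolding A_def using card_alg_conjugates_root_of_unity[OF x L g(1)] by simp_all
  define K where "K = (\<Sum>i<degree g. \<Sum>r\<in>A. cmod (coeff (lagrange_basis A r) i))"
  define C where "C = \<lceil>K\<rceil>"
  have "K \<ge> 0" unfolding K_def by (intro sum_nonneg) auto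
  let ?B = "{P :: int poly. degree P < degree g \<and> (\<forall>i. \<bar>coeff P i\<bar> \<le> C)}"
  have "{ipoly P x | P. \<forall>z\<in>A. cmod (ipoly P z) \<le> 1} \<subseteq> (\<lambda>P. ipoly P x) ` ?B"
  proof clarify
    fix P assume P: "\<forall>z\<in>A. cmod (ipoly P z) \<le> 1"
    obtain q r where qr: "P = g * q + r" "r = 0 \<or> degree r < degree g"
      using monic_int_poly_division[OF g(2)] by blast
    have deg_r: "degree r < degree g" using qr(2) int_min_poly_degree_pos[OF g(1)] by auto
    have same_values: "ipoly P z = ipoly r z" if "ipoly g z = 0" for z
      using qr(1) that by simp
    have "\<bar>coeff r i\<bar> \<le> C" for i
    proof (cases "i < degree g")
      case True
      have "cmod (coeff (map_poly of_int r) i) \<le> (\<Sum>z\<in>A. cmod (coeff (lagrange_basis A z) i))"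
        using P same_values A deg_r alg_conjugates_eq_roots[OF g(1)]
        by (intro norm_coeff_le_lagrange) (auto simp: A_def degree_map_poly)
      also have "\<dots> \<le> K"
        unfolding K_def using True by (intro member_le_sum) (auto intro: sum_nonneg)
      finally show ?thesis unfolding C_def by (simp add: coeff_map_poly) linarith
    next
      case False
      then have "coeff r i = 0" using deg_r by (intro coeff_eq_0) simp
      then show ?thesis unfolding C_def using \<open>K \<ge> 0\<close> by simp
    qed
    then have "r \<in> ?B" using deg_r by blast
    moreover have "ipoly P x = ipoly r x" using same_values g(1) by (simp add: int_min_poly_def)
    ultimately show "ipoly P x \<in> (\<lambda>P. ipoly P x) ` ?B" by blast
  qed
  moreover have "finite ((\<lambda>P. ipoly P x) ` ?B)" by (intro finite_imageI finite_int_polys_bounded)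
  ultimately show ?thesis unfolding A_def by (rule finite_subset)
qed

theorem kronecker_root_of_unity:
  assumes x: "x ^ L = 1" and L: "L > 0"
    and bounded: "\<forall>z\<in>alg_conjugates x. cmod (ipoly P z) \<le> 1"
  shows "ipoly P x = 0 \<or> (\<exists>s>0. ipoly P x ^ s = 1)"
proof (cases "ipoly P x = 0")
  case False
  let ?a = "ipoly P x"
  have "range (\<lambda>t. ?a ^ t) \<subseteq> {ipoly P x | P. \<forall>z\<in>alg_conjugates x. cmod (ipoly P z) \<le> 1}"
  proof clarify
    fix t
    have "\<forall>z\<in>alg_conjugates x. cmod (ipoly (P ^ t) z) \<le> 1"
      using bounded by (simp add: norm_power power_le_one)
    then show "\<exists>Q. ?a ^ t = ipoly Q x \<and> (\<forall>z\<in>alg_conjugates x. cmod (ipoly Q z) \<le> 1)"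
      by (intro exI[of _ "P ^ t"]) simp
  qed
  then have "finite (range (\<lambda>t. ?a ^ t))"
    using finite_values_bounded_on_conjugates[OF x L] by (rule finite_subset)
  then have "\<not> inj (\<lambda>t. ?a ^ t)" using finite_imageD by blast
  then obtain i j where ij: "i < j" "?a ^ i = ?a ^ j"
    by (metis (no_types, lifting) inj_def linorder_neqE_nat)
  then have "?a ^ i * ?a ^ (j - i) = ?a ^ i * 1"
    by (metis le_add_diff_inverse less_imp_le mult_1_right power_add)
  then have "?a ^ (j - i) = 1" using False by simp
  then show ?thesis using ij(1) by (intro disjI2 exI[of _ "j - i"]) simp
qed simp

section \<open>Roots of unity in \<open>\<int>[\<zeta>\<^sub>m]\<close>\<close>

lemma zeta_pow: "zeta N ^ k = cis (2 * pi * real k / real N)"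
proof -
  have "zeta N ^ k = cis (real k * (2 * pi / real N))" unfolding zeta_def by (rule Complex.DeMoivre)
  also have "real k * (2 * pi / real N) = 2 * pi * real k / real N" by simp
  finally show ?thesis .
qed

lemma zeta_pow_eq_1_iff:
  assumes "N > 0"
  shows "zeta N ^ k = 1 \<longleftrightarrow> N dvd k"
proof -
  have "zeta N ^ N = 1" using assms by (simp add: zeta_pow)
  have "zeta N ^ k = zeta N ^ (N * (k div N) + k mod N)" by simp
  also have "\<dots> = (zeta N ^ N) ^ (k div N) * zeta N ^ (k mod N)" by (simp only: power_add power_mult)
  finally have "zeta N ^ k = zeta N ^ (k mod N)" using \<open>zeta N ^ N = 1\<close> by simp
  moreover have "zeta N ^ (k mod N) = 1 \<longleftrightarrow> k mod N = 0"
  proof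
    assume "zeta N ^ (k mod N) = 1"
    then have e: "(\<lambda>k. cis (2 * pi * real k / real N)) (k mod N) = (\<lambda>k. cis (2 * pi * real k / real N)) 0"
      by (simp add: zeta_pow)
    have "inj_on (\<lambda>k. cis (2 * pi * real k / real N)) {..<N}"
      using Complex.bij_betw_roots_unity[OF assms] by (simp add: bij_betw_def)
    from inj_onD[OF this e] show "k mod N = 0" using assms by simp
  qed simp
  ultimately show ?thesis by (simp add: dvd_eq_mod_eq_0)
qed

lemma root_of_unity_eq_zeta_pow:
  assumes "N > 0" "z ^ N = 1"
  obtains t where "t < N" "z = zeta N ^ t"
proof -
  have "z \<in> (\<lambda>k. cis (2 * pi * real k / real N)) ` {..<N}"
    using Complex.bij_betw_roots_unity[OF assms(1)] assms(2) by (auto simp: bij_betw_def)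
  then show ?thesis using that by (auto simp: zeta_pow)
qed

lemma zeta_mult_pow:
  assumes "q > 0"
  shows "zeta (m * q) ^ q = zeta m"
proof -
  have "zeta (m * q) ^ q = cis (2 * pi * real q / real (m * q))" by (rule zeta_pow)
  also have "2 * pi * real q / real (m * q) = 2 * pi / real m" using assms by simp
  finally show ?thesis by (simp add: zeta_def)
qed

lemma norm_zeta_pow [simp]: "cmod (zeta N ^ k) = 1"
  by (simp add: zeta_def norm_power)

lemma norm_root_of_unity:
  assumes "z ^ m = 1" "m > 0"
  shows "cmod z = 1"
proof -
  have "cmod z ^ m = 1 ^ m" using assms(1) by (metis norm_one norm_power power_one)
  then show ?thesis using assms(2) by (simp add: power_eq_imp_eq_base)
qed

lemma root_of_unity_cnj:
  assumes "z ^ m = 1" "m > 0"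
  shows "cnj z = z ^ (m - 1)"
proof -
  have "z * cnj z = 1"
    using norm_root_of_unity[OF assms] by (metis complex_norm_square of_real_1 power_one)
  moreover have "z ^ (m - 1) * z = 1" using assms by (metis power_minus_mult)
  ultimately have "cnj z = (z ^ (m - 1) * z) * cnj z" by simp
  then show ?thesis using \<open>z * cnj z = 1\<close> by (simp add: mult.assoc)
qed

lemma exists_coprime_one_plus_mult:
  fixes m q :: nat
  assumes "even m" "prime q"
  obtains c where "coprime (1 + m * c) (q * m)" "\<not> q dvd c"
proof -
  have one_plus: "coprime (1 + m * c) m" for c
  proof (rule coprimeI)
    fix d assume "d dvd 1 + m * c" "d dvd m"
    then have "d dvd (1 + m * c) - m * c" by (intro dvd_diff_nat) simp_all
    then show "is_unit d" by simp
  qed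
  have coprime_if: "coprime (1 + m * c) (q * m)" if "\<not> q dvd 1 + m * c" for c
    using one_plus[of c] prime_imp_coprime[OF assms(2) that] by (simp add: coprime_commute)
  have q_gt_1: "q > 1" using assms(2) prime_gt_1_nat by blast
  show ?thesis
  proof (cases "q dvd 1 + m")
    case True
    have "\<not> q dvd 1 + m * 2"
    proof
      assume "q dvd 1 + m * 2"
      then have "q dvd (1 + m * 2) - (1 + m)" using True by (rule dvd_diff_nat)
      then have "q dvd (1 + m) - m" using True by (intro dvd_diff_nat) simp_all
      then show False using q_gt_1 by simp
    qed
    moreover have "q \<noteq> 2" using True assms(1) by auto
    then have "\<not> q dvd 2" using assms(2) primes_dvd_imp_eq[OF assms(2) two_is_prime_nat] by blast
    ultimately show ?thesis using that[of 2] coprime_if by blast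
  next
    case False
    moreover have "\<not> q dvd 1" using q_gt_1 by simp
    ultimately show ?thesis using that[of 1] coprime_if[of 1] by simp
  qed
qed

text \<open>With \<open>N = q m\<close> and \<open>w = \<zeta>\<^sub>N\<close>, write \<open>\<eta> = w\<^sup>t\<close>. The conjugation \<open>w \<mapsto> w\<^sup>1\<^sup>+\<^sup>m\<^sup>c\<close>
  fixes \<open>\<zeta>\<^sub>m = w\<^sup>q\<close> and hence \<open>\<eta>\<close>, which forces \<open>q\<close> to divide \<open>t\<close>.\<close>
lemma root_of_unity_in_cyclotomic_ring_prime_step:
  assumes m: "even m" "m > 0" and q: "prime q"
    and eta: "ipoly P (zeta m) ^ (q * m) = 1"
  shows "ipoly P (zeta m) ^ m = 1"
proof -
  define N where "N = q * m"
  define w where "w = zeta N"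
  have N: "N > 0" using m q prime_gt_0_nat by (simp add: N_def)
  have wN: "w ^ N = 1" using zeta_pow_eq_1_iff[OF N] by (simp add: w_def)
  have wq: "w ^ q = zeta m" unfolding w_def N_def using q prime_gt_0_nat zeta_mult_pow
    by (metis mult.commute)
  obtain t where t: "ipoly P (zeta m) = w ^ t"
    using root_of_unity_eq_zeta_pow[OF N] eta by (metis N_def w_def)
  obtain c where c: "coprime (1 + m * c) N" "\<not> q dvd c"
    using exists_coprime_one_plus_mult[OF m(1) q] by (metis N_def)
  define k where "k = 1 + m * c"
  define R where "R = pcompose P (monom 1 q) - monom 1 t"
  have "coprime k N" using c(1) by (simp add: k_def)
  then have "w ^ k \<in> alg_conjugates w" by (rule pow_coprime_in_alg_conjugates[OF wN N])
  moreover have "ipoly R w = 0" using t wq by (simp add: R_def)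
  ultimately have "ipoly R (w ^ k) = 0" unfolding alg_conjugates_def by blast
  then have "ipoly P ((w ^ k) ^ q) = (w ^ k) ^ t" by (simp add: R_def power_mult_distrib flip: power_mult)
  moreover have "k * q = q + N * c" "k * t = t + m * c * t" by (simp_all add: k_def N_def algebra_simps)
  then have "(w ^ k) ^ q = w ^ q * (w ^ N) ^ c" "(w ^ k) ^ t = w ^ t * w ^ (m * c * t)"
    by (metis power_add power_mult)+
  then have "(w ^ k) ^ q = w ^ q" "(w ^ k) ^ t = w ^ t * w ^ (m * c * t)" using wN by simp_all
  ultimately have "w ^ t = w ^ t * w ^ (m * c * t)" using t wq by simp
  moreover have "w \<noteq> 0" by (simp add: w_def zeta_def)
  ultimately have "w ^ (m * c * t) = 1" by simp
  then have "q * m dvd m * (c * t)" using zeta_pow_eq_1_iff[OF N] by (simp add: w_def N_def mult.assoc)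
  then have "q dvd c * t" using m(2) by (simp add: mult.commute)
  then obtain t' where "t = q * t'" using q c(2) by (metis dvdE prime_dvd_mult_iff)
  then have "t * m = N * t'" by (simp add: N_def)
  then have "ipoly P (zeta m) ^ m = (w ^ N) ^ t'" using t by (metis power_mult)
  then show ?thesis using wN by simp
qed

text \<open>Evenness of \<open>m\<close> is needed: for odd \<open>m\<close>, \<open>-1 \<in> \<int>[\<zeta>\<^sub>m]\<close> but \<open>(-1)\<^sup>m \<noteq> 1\<close>.\<close>
theorem root_of_unity_in_cyclotomic_ring:
  assumes m: "even m" "m > 0" and s: "s > 0" "ipoly P (zeta m) ^ s = 1"
  shows "ipoly P (zeta m) ^ m = 1"
proof -
  have key: "s > 0 \<Longrightarrow> ipoly P (zeta m) ^ (m * s) = 1 \<Longrightarrow> ipoly P (zeta m) ^ m = 1" for s P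
  proof (induction s arbitrary: P rule: less_induct)
    case (less s)
    show ?case
    proof (cases "s = 1")
      case False
      then obtain q s' where q: "prime q" "s = q * s'" using less.prems(1)
        by (metis prime_factor_nat dvdE)
      moreover have "s \<noteq> 0" using less.prems(1) by simp
      ultimately have "s' > 0" "s' < s" using prime_gt_1_nat[OF q(1)] by auto
      have "ipoly (P ^ s') (zeta m) ^ (q * m) = 1"
        using less.prems(2) q(2) by (simp add: mult.commute mult.left_commute flip: power_mult)
      then have "ipoly (P ^ s') (zeta m) ^ m = 1"
        by (rule root_of_unity_in_cyclotomic_ring_prime_step[OF m q(1)])
      then have "ipoly P (zeta m) ^ (m * s') = 1" by (simp add: mult.commute flip: power_mult)
      then show ?thesis using less.IH[OF \<open>s' < s\<close> \<open>s' > 0\<close>] by blast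
    qed (use less.prems in simp)
  qed
  show ?thesis using key[OF s(1)] s(2) by (metis power_mult power_one mult.commute)
qed

lemma ipoly_norm_square_root_of_unity:
  assumes "z ^ m = 1" "m > 0"
  shows "ipoly (P * pcompose P (monom 1 (m - 1))) z = of_real ((cmod (ipoly P z))\<^sup>2)"
proof -
  have "ipoly P (z ^ (m - 1)) = cnj (ipoly P z)"
    using root_of_unity_cnj[OF assms] by (simp flip: ipoly_cnj)
  then show ?thesis using complex_norm_square[of "ipoly P z"] by simp
qed

lemma norm_one_pair_alg_conjugates:
  assumes x: "x ^ m = 1" and m: "m > 0" and z: "z \<in> alg_conjugates x"
    and norm: "(cmod (ipoly P x))\<^sup>2 + (cmod (ipoly Q x))\<^sup>2 = 1"
  shows "(cmod (ipoly P z))\<^sup>2 + (cmod (ipoly Q z))\<^sup>2 = 1"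
proof -
  define S where "S = P * pcompose P (monom 1 (m - 1)) + Q * pcompose Q (monom 1 (m - 1)) - 1"
  have S: "ipoly S y = of_real ((cmod (ipoly P y))\<^sup>2 + (cmod (ipoly Q y))\<^sup>2 - 1)" if "y ^ m = 1" for y
    using ipoly_norm_square_root_of_unity[OF that m] by (simp add: S_def)
  have "ipoly S x = 0" using S[OF x] norm by simp
  then have "ipoly S z = 0" using z by (simp add: alg_conjugates_def)
  then have "complex_of_real ((cmod (ipoly P z))\<^sup>2 + (cmod (ipoly Q z))\<^sup>2 - 1) = 0"
    using S[OF alg_conjugates_root_of_unity[OF x z]] by simp
  then show ?thesis by (subst (asm) of_real_eq_0_iff) simp
qed

lemma norm_one_pair_cyclotomic:
  assumes m: "even m" "m > 0"
    and norm: "(cmod (ipoly P (zeta m)))\<^sup>2 + (cmod (ipoly Q (zeta m)))\<^sup>2 = 1"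
  shows "ipoly Q (zeta m) = 0 \<and> ipoly P (zeta m) ^ m = 1 \<or>
         ipoly P (zeta m) = 0 \<and> ipoly Q (zeta m) ^ m = 1"
proof -
  let ?a = "ipoly P (zeta m)" and ?b = "ipoly Q (zeta m)"
  have x: "zeta m ^ m = 1" using zeta_pow_eq_1_iff[OF m(2)] by simp
  have bounded: "cmod (ipoly P z) \<le> 1 \<and> cmod (ipoly Q z) \<le> 1" if "z \<in> alg_conjugates (zeta m)" for z
  proof -
    have sum: "(cmod (ipoly P z))\<^sup>2 + (cmod (ipoly Q z))\<^sup>2 = 1"
      using norm_one_pair_alg_conjugates[OF x m(2) that norm] .
    have "(cmod (ipoly P z))\<^sup>2 \<le> 1" "(cmod (ipoly Q z))\<^sup>2 \<le> 1"
      using sum zero_le_power2[of "cmod (ipoly P z)"] zero_le_power2[of "cmod (ipoly Q z)"] by linarith+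
    then show ?thesis
      using power2_le_imp_le[of "cmod (ipoly P z)" 1] power2_le_imp_le[of "cmod (ipoly Q z)" 1] by simp
  qed
  have a: "?a = 0 \<or> (\<exists>s>0. ?a ^ s = 1)" and b: "?b = 0 \<or> (\<exists>s>0. ?b ^ s = 1)"
    using kronecker_root_of_unity[OF x m(2)] bounded by blast+
  show ?thesis
  proof (cases "?a = 0")
    case True
    then have "?b \<noteq> 0" using norm by auto
    then obtain s where "s > 0" "?b ^ s = 1" using b by blast
    then show ?thesis using True root_of_unity_in_cyclotomic_ring[OF m] by blast
  next
    case False
    then obtain s where s: "s > 0" "?a ^ s = 1" using a by blast
    have "?b = 0"
    proof (rule ccontr)
      assume "?b \<noteq> 0"
      then obtain s' where "s' > 0" "?b ^ s' = 1" using b by blast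
      then have "cmod ?a = 1" "cmod ?b = 1" using s norm_root_of_unity by blast+
      then show False using norm by simp
    qed
    then show ?thesis using root_of_unity_in_cyclotomic_ring[OF m s] by blast
  qed
qed

section \<open>Quaternion arithmetic\<close>

lemma quat_eqI: "cpart x = cpart y \<Longrightarrow> jpart x = jpart y \<Longrightarrow> x = y"
  by (simp add: quat.expand)

lemma cpart_mult [simp]: "cpart (x * y) = cpart x * cpart y - jpart x * cnj (jpart y)"
  and jpart_mult [simp]: "jpart (x * y) = cpart x * jpart y + jpart x * cnj (cpart y)"
  and cpart_add [simp]: "cpart (x + y) = cpart x + cpart y"
  and jpart_add [simp]: "jpart (x + y) = jpart x + jpart y"
  and cpart_uminus [simp]: "cpart (- x) = - cpart x"
  and jpart_uminus [simp]: "jpart (- x) = - jpart x"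
  and cpart_diff [simp]: "cpart (x - y) = cpart x - cpart y"
  and jpart_diff [simp]: "jpart (x - y) = jpart x - jpart y"
  and cpart_one [simp]: "cpart 1 = 1"
  and jpart_one [simp]: "jpart 1 = 0"
  and cpart_zero [simp]: "cpart 0 = 0"
  and jpart_zero [simp]: "jpart 0 = 0"
  and cpart_cq [simp]: "cpart (cq z) = z"
  and jpart_cq [simp]: "jpart (cq z) = 0"
  and cpart_jq [simp]: "cpart jq = 0"
  and jpart_jq [simp]: "jpart jq = 1"
  by (simp_all add: times_quat_def plus_quat_def uminus_quat_def minus_quat_def one_quat_def
      zero_quat_def cq_def jq_def)

lemma cq_mult: "cq a * cq b = cq (a * b)"
  by (rule quat_eqI) simp_all

lemma cq_one: "cq 1 = 1"
  by (rule quat_eqI) simp_all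

lemma cq_power: "cq a ^ k = cq (a ^ k)"
  by (induction k) (simp_all add: cq_one cq_mult)

lemma cq_mult_jq: "cq z * jq = Quat 0 z"
  by (rule quat_eqI) simp_all

lemma cq_of_real_commute: "cq (of_real r) * x = x * cq (of_real r)"
  by (rule quat_eqI) simp_all

definition qconj :: "quat \<Rightarrow> quat" where
  "qconj q = Quat (cnj (cpart q)) (- jpart q)"

lemma cpart_qconj [simp]: "cpart (qconj x) = cnj (cpart x)"
  and jpart_qconj [simp]: "jpart (qconj x) = - jpart x"
  by (simp_all add: qconj_def)

lemma qconj_mult: "qconj (x * y) = qconj y * qconj x"
  by (rule quat_eqI) (simp_all add: algebra_simps)

lemma qconj_add: "qconj (x + y) = qconj x + qconj y"
  and qconj_uminus: "qconj (- x) = - qconj x"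
  and qconj_one: "qconj 1 = 1"
  and qconj_cq: "qconj (cq z) = cq (cnj z)"
  and qconj_jq: "qconj jq = - jq"
  by (rule quat_eqI; simp)+

lemma of_real_nr: "complex_of_real (nr x) = cpart x * cnj (cpart x) + jpart x * cnj (jpart x)"
  by (simp only: nr_def of_real_add complex_norm_square)

lemma mult_qconj: "x * qconj x = cq (of_real (nr x))"
  and qconj_mult_self: "qconj x * x = cq (of_real (nr x))"
  by (rule quat_eqI; simp add: of_real_nr algebra_simps)+

lemma nr_mult: "nr (x * y) = nr x * nr y"
proof -
  have "complex_of_real (nr (x * y)) = complex_of_real (nr x * nr y)"
    unfolding of_real_mult of_real_nr by (simp add: algebra_simps)
  then show ?thesis by (simp only: of_real_eq_iff)
qed

lemma nr_eq_0_iff: "nr x = 0 \<longleftrightarrow> x = 0"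
proof
  assume "nr x = 0"
  then have "cmod (cpart x) = 0" "cmod (jpart x) = 0"
    unfolding nr_def by (simp_all add: add_nonneg_eq_0_iff)
  then show "x = 0" by (intro quat_eqI) simp_all
qed (simp add: nr_def)

lemma nr_one: "nr 1 = 1"
  and nr_qconj: "nr (qconj x) = nr x"
  and nr_cq: "nr (cq z) = (cmod z)\<^sup>2"
  by (simp_all add: nr_def)

definition qinv :: "quat \<Rightarrow> quat" where
  "qinv q = cq (of_real (1 / nr q)) * qconj q"

lemma qinv_inverse:
  assumes "q \<noteq> 0"
  shows "q * qinv q = 1" "qinv q * q = 1"
proof -
  have "nr q \<noteq> 0" using assms nr_eq_0_iff by blast
  then have unit: "cq (of_real (1 / nr q)) * cq (of_real (nr q)) = 1"
    by (simp add: cq_mult cq_one flip: of_real_mult)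
  have "q * qinv q = cq (of_real (1 / nr q)) * (q * qconj q)"
    unfolding qinv_def by (metis cq_of_real_commute mult.assoc)
  then show "q * qinv q = 1" using unit by (simp only: mult_qconj)
  show "qinv q * q = 1"
    using unit by (simp add: qinv_def mult.assoc qconj_mult_self)
qed

lemma carrier_unitq [simp]: "carrier unitq = {q. nr q = 1}"
  and mult_unitq [simp]: "x \<otimes>\<^bsub>unitq\<^esub> y = x * y"
  and one_unitq [simp]: "\<one>\<^bsub>unitq\<^esub> = 1"
  by (simp_all add: unitq_def)

lemma group_unitq: "group unitq"
proof (rule groupI)
  fix x assume "x \<in> carrier unitq"
  then show "\<exists>y\<in>carrier unitq. y \<otimes>\<^bsub>unitq\<^esub> x = \<one>\<^bsub>unitq\<^esub>"
    by (intro bexI[of _ "qconj x"]) (simp_all add: qconj_mult_self cq_one nr_qconj)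
qed (simp_all add: nr_mult nr_one mult.assoc)

lemma inv_unitq: "nr x = 1 \<Longrightarrow> inv\<^bsub>unitq\<^esub> x = qconj x"
  by (rule group.inv_equality[OF group_unitq]) (simp_all add: qconj_mult_self cq_one nr_qconj)

lemma subgroup_unitqI:
  assumes "1 \<in> S" "\<And>x y. x \<in> S \<Longrightarrow> y \<in> S \<Longrightarrow> x * y \<in> S" "\<And>x. x \<in> S \<Longrightarrow> qconj x \<in> S"
    and "\<And>x. x \<in> S \<Longrightarrow> nr x = 1"
  shows "subgroup S unitq"
  using assms by (intro group.subgroupI[OF group_unitq]) (auto simp: inv_unitq)

lemma conjugation_iso_unitq:
  assumes "b \<noteq> 0"
  shows "(\<lambda>x. b * x * qinv b) \<in> iso unitq unitq"
proof -
  note inv = qinv_inverse[OF assms]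
  have "qinv b \<noteq> 0" using inv(1) by auto
  have nr_conj: "nr (b * x * qinv b) = nr x" for x
    using arg_cong[OF inv(1), of nr] by (simp add: nr_mult nr_one)
  have "b * (x * y) * qinv b = (b * x * qinv b) * (b * y * qinv b)" for x y
  proof -
    have "(b * x * qinv b) * (b * y * qinv b) = b * x * (qinv b * b) * y * qinv b"
      by (simp add: mult.assoc)
    then show ?thesis using inv(2) by (simp add: mult.assoc)
  qed
  then have "(\<lambda>x. b * x * qinv b) \<in> hom unitq unitq"
    by (auto intro!: homI simp: nr_conj)
  moreover have "bij_betw (\<lambda>x. b * x * qinv b) {q. nr q = 1} {q. nr q = 1}"
  proof (rule bij_betwI[where g = "\<lambda>y. qinv b * y * b"])
    have "nr (qinv b * y * b) = nr y" for y
      using arg_cong[OF inv(2), of nr] by (simp add: nr_mult nr_one algebra_simps)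
    then show "(\<lambda>y. qinv b * y * b) \<in> {q. nr q = 1} \<rightarrow> {q. nr q = 1}" by simp
  qed (use inv nr_conj in \<open>auto simp: mult.assoc, simp_all flip: mult.assoc\<close>)
  ultimately show ?thesis by (simp add: iso_def)
qed

lemma Zring_power: "x \<in> Zring d \<Longrightarrow> x ^ k \<in> Zring d"
  by (induction k) (simp_all add: Zring.one Zring.mult)

lemma Zring_cq_zeta_power: "cq (zeta d ^ k) \<in> Zring d"
  using Zring_power[OF Zring.zeta, of d k] by (simp add: cq_power)

lemma subring_Zring: "subring_q (Zring d)"
  by (simp add: subring_q_def Zring.one Zring.add Zring.neg Zring.mult)

lemma Zring_qconj:
  assumes "d > 0"
  shows "x \<in> Zring d \<Longrightarrow> qconj x \<in> Zring d"
proof (induction rule: Zring.induct)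
  case zeta
  have "cnj (zeta d) = zeta d ^ (d - 1)"
    using root_of_unity_cnj zeta_pow_eq_1_iff[OF assms] assms by simp
  then show ?case by (simp add: qconj_cq Zring_cq_zeta_power)
qed (simp_all add: qconj_one qconj_jq qconj_add qconj_uminus qconj_mult Zring.intros)

text \<open>Products stay of this form because \<open>j P(\<zeta>) = P(\<zeta>\<^sup>d\<^sup>-\<^sup>1) j\<close>.\<close>
lemma Zring_eq_Quat_ipoly:
  assumes d: "d > 0"
  shows "x \<in> Zring d \<Longrightarrow> \<exists>P Q. x = Quat (ipoly P (zeta d)) (ipoly Q (zeta d))"
proof (induction rule: Zring.induct)
  case one
  have "1 = Quat (ipoly 1 (zeta d)) (ipoly 0 (zeta d))" by (rule quat_eqI) simp_all
  then show ?case by blast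
next
  case zeta
  have "cq (zeta d) = Quat (ipoly (monom 1 1) (zeta d)) (ipoly 0 (zeta d))" by (rule quat_eqI) simp_all
  then show ?case by blast
next
  case j
  have "jq = Quat (ipoly 0 (zeta d)) (ipoly 1 (zeta d))" by (rule quat_eqI) simp_all
  then show ?case by blast
next
  case (add x y)
  then obtain P1 Q1 P2 Q2 where "x = Quat (ipoly P1 (zeta d)) (ipoly Q1 (zeta d))"
    "y = Quat (ipoly P2 (zeta d)) (ipoly Q2 (zeta d))" by blast
  then have "x + y = Quat (ipoly (P1 + P2) (zeta d)) (ipoly (Q1 + Q2) (zeta d))"
    by (intro quat_eqI) simp_all
  then show ?case by blast
next
  case (neg x)
  then obtain P Q where "x = Quat (ipoly P (zeta d)) (ipoly Q (zeta d))" by blast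
  then have "- x = Quat (ipoly (- P) (zeta d)) (ipoly (- Q) (zeta d))" by (intro quat_eqI) simp_all
  then show ?case by blast
next
  case (mult x y)
  then obtain P1 Q1 P2 Q2 where xy: "x = Quat (ipoly P1 (zeta d)) (ipoly Q1 (zeta d))"
    "y = Quat (ipoly P2 (zeta d)) (ipoly Q2 (zeta d))" by blast
  have cnj_ipoly: "cnj (ipoly R (zeta d)) = ipoly (pcompose R (monom 1 (d - 1))) (zeta d)" for R
    using root_of_unity_cnj[of "zeta d" d] zeta_pow_eq_1_iff[OF d] d by (simp flip: ipoly_cnj)
  have "x * y = Quat (ipoly (P1 * P2 - Q1 * pcompose Q2 (monom 1 (d - 1))) (zeta d))
                     (ipoly (P1 * Q2 + Q1 * pcompose P2 (monom 1 (d - 1))) (zeta d))"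
    using xy by (intro quat_eqI) (simp_all add: cnj_ipoly)
  then show ?case by blast
qed

lemma subgroup_norm_one_Zring:
  assumes "d > 0"
  shows "subgroup {x \<in> Zring d. nr x = 1} unitq"
  by (rule subgroup_unitqI) (auto simp: Zring.one nr_one Zring.mult nr_mult Zring_qconj[OF assms] nr_qconj)

theorem norm_one_group_Zring:
  assumes "n \<ge> 1"
  shows "norm_one_group (Zring (2 * n)) = Q4 n"
proof -
  define m where "m = 2 * n"
  have m: "even m" "m > 0" using assms by (simp_all add: m_def)
  have "x \<in> carrier (Q4 n)" if x: "x \<in> Zring m" "nr x = 1" for x
  proof -
    obtain P Q where PQ: "x = Quat (ipoly P (zeta m)) (ipoly Q (zeta m))"
      using Zring_eq_Quat_ipoly[OF m(2) x(1)] by blast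
    then have "(cmod (ipoly P (zeta m)))\<^sup>2 + (cmod (ipoly Q (zeta m)))\<^sup>2 = 1"
      using x(2) by (simp add: nr_def)
    then consider "ipoly Q (zeta m) = 0" "ipoly P (zeta m) ^ m = 1"
      | "ipoly P (zeta m) = 0" "ipoly Q (zeta m) ^ m = 1"
      using norm_one_pair_cyclotomic[OF m] by blast
    then show ?thesis
    proof cases
      case 1
      then obtain t where "t < m" "ipoly P (zeta m) = zeta m ^ t"
        using root_of_unity_eq_zeta_pow[OF m(2)] by blast
      then show ?thesis using PQ 1 by (auto simp: Q4_def m_def cq_def)
    next
      case 2
      then obtain t where "t < m" "ipoly Q (zeta m) = zeta m ^ t"
        using root_of_unity_eq_zeta_pow[OF m(2)] by blast
      then show ?thesis using PQ 2 by (auto simp: Q4_def m_def cq_mult_jq)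
    qed
  qed
  moreover have "x \<in> Zring m \<and> nr x = 1" if "x \<in> carrier (Q4 n)" for x
    using that by (auto simp: Q4_def m_def Zring_cq_zeta_power nr_cq nr_mult nr_def
        intro: Zring.mult Zring.j)
  ultimately have "{x \<in> Zring (2 * n). nr x = 1} = carrier (Q4 n)" unfolding m_def by blast
  then show ?thesis by (simp add: norm_one_group_def Q4_def)
qed

section \<open>Free left ideals are principal\<close>

text \<open>Two nonzero elements \<open>b, b'\<close> are never left linearly independent over a ring closed
  under conjugation: \<open>(b b'\<^sup>*) b' - (b' b'\<^sup>*) b = 0\<close>, as \<open>b' b'\<^sup>* = nr b'\<close> is central.\<close>
lemma left_independent_eq_singleton:
  assumes R: "subring_q R" "\<And>x. x \<in> R \<Longrightarrow> qconj x \<in> R" and BR: "B \<subseteq> R"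
    and indep: "\<forall>F c. finite F \<and> F \<subseteq> B \<and> (\<forall>b\<in>F. c b \<in> R) \<and> (\<Sum>b\<in>F. c b * b) = 0
                  \<longrightarrow> (\<forall>b\<in>F. c b = 0)"
    and b: "b \<in> B"
  shows "B = {b}" "b \<noteq> 0"
proof -
  have "1 \<in> R" and mult: "\<And>x y. x \<in> R \<Longrightarrow> y \<in> R \<Longrightarrow> x * y \<in> R"
    and neg: "\<And>x. x \<in> R \<Longrightarrow> - x \<in> R" using R(1) by (auto simp: subring_q_def)
  have nonzero: "b' \<noteq> 0" if "b' \<in> B" for b'
  proof
    assume "b' = 0"
    then have "(\<lambda>_. 1 :: quat) b' = 0"
      using indep[rule_format, of "{b'}" "\<lambda>_. 1" b'] that \<open>1 \<in> R\<close> by simp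
    then show False by (simp add: one_quat_def zero_quat_def)
  qed
  have "b' = b" if b': "b' \<in> B" for b'
  proof (rule ccontr)
    assume ne: "b' \<noteq> b"
    define c where "c = (\<lambda>z. if z = b' then b * qconj b' else - (b' * qconj b'))"
    have "b \<in> R" "b' \<in> R" using b b' BR by auto
    then have "\<forall>z\<in>{b', b}. c z \<in> R" by (auto simp: c_def intro!: mult neg R(2))
    moreover have "(\<Sum>z\<in>{b', b}. c z * z) = b * (qconj b' * b') - (b' * qconj b') * b"
      using ne by (simp add: c_def mult.assoc)
    then have "(\<Sum>z\<in>{b', b}. c z * z) = 0"
      by (simp only: qconj_mult_self mult_qconj cq_of_real_commute diff_self)
    ultimately have "c b = 0" using b b' by (intro indep[rule_format, of "{b', b}" c b]) auto
    then have "cq (of_real (nr b')) = 0" using ne by (simp add: c_def mult_qconj)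
    then have "cpart (cq (of_real (nr b'))) = cpart 0" by (rule arg_cong)
    then have "nr b' = 0" by simp
    then show False using nonzero[OF b'] nr_eq_0_iff by blast
  qed
  then show "B = {b}" using b by blast
  show "b \<noteq> 0" using nonzero[OF b] .
qed

lemma free_left_ideal_principal:
  assumes R: "subring_q R" "\<And>x. x \<in> R \<Longrightarrow> qconj x \<in> R"
    and I: "left_ideal R I" "I \<noteq> {0}" and free: "free_left_module R I"
  obtains b where "b \<in> I" "b \<noteq> 0" "I = (\<lambda>c. c * b) ` R"
proof -
  obtain B where B: "B \<subseteq> I"
    and indep: "\<forall>F c. finite F \<and> F \<subseteq> B \<and> (\<forall>b\<in>F. c b \<in> R) \<and> (\<Sum>b\<in>F. c b * b) = 0
                  \<longrightarrow> (\<forall>b\<in>F. c b = 0)"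
    and span: "\<forall>x\<in>I. \<exists>F c. finite F \<and> F \<subseteq> B \<and> (\<forall>b\<in>F. c b \<in> R) \<and> x = (\<Sum>b\<in>F. c b * b)"
    using free unfolding free_left_module_def by (elim exE conjE) blast
  have IR: "I \<subseteq> R" and ideal: "\<And>r x. r \<in> R \<Longrightarrow> x \<in> I \<Longrightarrow> r * x \<in> I" and "0 \<in> I"
    using I(1) by (auto simp: left_ideal_def)
  obtain x0 where "x0 \<in> I" "x0 \<noteq> 0" using I(2) \<open>0 \<in> I\<close> by blast
  then obtain F c where "F \<subseteq> B" "x0 = (\<Sum>b\<in>F. c b * b)" using span by blast
  then have "F \<noteq> {}" using \<open>x0 \<noteq> 0\<close> by auto
  then obtain b where "b \<in> B" using \<open>F \<subseteq> B\<close> by blast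
  then have b: "B = {b}" "b \<noteq> 0" using left_independent_eq_singleton[OF R _ indep] B IR by blast+
  have "x \<in> (\<lambda>c. c * b) ` R" if xI: "x \<in> I" for x
  proof -
    obtain F c where "finite F \<and> F \<subseteq> B \<and> (\<forall>z\<in>F. c z \<in> R) \<and> x = (\<Sum>z\<in>F. c z * z)"
      using bspec[OF span xI] by blast
    then have F: "F \<subseteq> {b}" "\<forall>z\<in>F. c z \<in> R" "x = (\<Sum>z\<in>F. c z * z)" using b(1) by simp_all
    then consider "F = {}" | "F = {b}" by (auto simp: subset_singleton_iff)
    then show ?thesis
    proof cases
      case 1
      have "1 + - 1 \<in> R" using R(1) unfolding subring_q_def by blast
      then have "0 \<in> R" by simp
      moreover have "x = 0 * b" using F(3) 1 by simp
      ultimately show ?thesis by (rule rev_image_eqI)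
    next
      case 2
      then show ?thesis using F(2,3) by simp
    qed
  qed
  moreover have "(\<lambda>c. c * b) ` R \<subseteq> I" using b B ideal by blast
  ultimately have "I = (\<lambda>c. c * b) ` R" by (rule subset_antisym[OF subsetI])
  then show ?thesis using that b B by blast
qed

lemma conjugate_stabilizer_in_norm_one:
  assumes b: "b \<in> I" "b \<noteq> 0" "I = (\<lambda>c. c * b) ` R" and u: "nr u = 1" "\<forall>x\<in>I. x * u \<in> I"
  shows "b * u * qinv b \<in> {x \<in> R. nr x = 1}"
proof -
  obtain c where c: "c \<in> R" "b * u = c * b" using u(2) b(1,3) by blast
  have "b * u * qinv b = c * b * qinv b" unfolding c(2) ..
  also have "\<dots> = c" using qinv_inverse(1)[OF b(2)] by (simp add: mult.assoc)
  finally have "b * u * qinv b = c" .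
  moreover have "nr (b * u * qinv b) = 1"
    using conjugation_iso_unitq[OF b(2)] u(1) by (auto simp: iso_def hom_def)
  ultimately show ?thesis using c(1) by simp
qed

lemma generate_embeds_by_conjugation:
  assumes b: "b \<noteq> 0" and U: "U \<subseteq> carrier unitq" and S: "subgroup S unitq"
    and US: "(\<lambda>x. b * x * qinv b) ` U \<subseteq> S"
  shows "\<exists>H. subgroup H (unitq\<lparr>carrier := S\<rparr>) \<and>
           unitq\<lparr>carrier := generate unitq U\<rparr> \<cong> (unitq\<lparr>carrier := S\<rparr>)\<lparr>carrier := H\<rparr>"
proof -
  define \<phi> where "\<phi> = (\<lambda>x. b * x * qinv b)"
  have iso: "\<phi> \<in> iso unitq unitq" unfolding \<phi>_def by (rule conjugation_iso_unitq[OF b])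
  then interpret \<phi>: group_hom unitq unitq \<phi>
    by (simp add: group_hom_def group_hom_axioms_def group_unitq iso_imp_homomorphism)
  have gen: "subgroup (generate unitq U) unitq" by (rule group.generate_is_subgroup[OF group_unitq U])
  have "\<phi> ` generate unitq U \<subseteq> S"
    unfolding \<phi>.generate_img[OF U, symmetric] using US
    by (intro group.generate_subgroup_incl[OF group_unitq _ S]) (simp add: \<phi>_def)
  then have "subgroup (\<phi> ` generate unitq U) (unitq\<lparr>carrier := S\<rparr>)"
    by (rule group.subgroup_incl[OF group_unitq \<phi>.subgroup_img_is_subgroup[OF gen] S])
  moreover have "unitq\<lparr>carrier := generate unitq U\<rparr> \<cong> (unitq\<lparr>carrier := S\<rparr>)\<lparr>carrier := \<phi> ` generate unitq U\<rparr>"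
    using iso_restrict[OF iso group_unitq group_unitq gen] by (auto intro: is_isoI)
  ultimately show ?thesis by blast
qed

theorem lemma4p2:
  fixes n :: nat and I :: "quat set" and U :: "quat set"
  assumes "n \<ge> 2"
    and "\<forall>\<Gamma>. maximal_order (Qalg (2*n)) \<Gamma> \<and> Zring (2*n) \<subseteq> \<Gamma>
              \<longrightarrow> norm_one_group \<Gamma> \<cong> Q4 n"
    and "left_ideal (Zring (2*n)) I" and "I \<noteq> {0}"
    and "finite U" and "U \<subseteq> Qalg (2*n)"
    and "\<forall>u\<in>U. nr u = 1 \<and> (\<forall>x\<in>I. x * u \<in> I)"
    and "\<not> (\<exists>H. subgroup H (Q4 n) \<and>
              unitq\<lparr>carrier := generate unitq U\<rparr> \<cong> (Q4 n)\<lparr>carrier := H\<rparr>)"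
  shows "\<not> free_left_module (Zring (2*n)) I"
proof
  assume free: "free_left_module (Zring (2*n)) I"
  have d: "2 * n > 0" using assms(1) by simp
  obtain b where b: "b \<in> I" "b \<noteq> 0" "I = (\<lambda>c. c * b) ` Zring (2*n)"
    using free_left_ideal_principal[OF subring_Zring Zring_qconj[OF d] assms(3,4) free] by blast
  have "(\<lambda>x. b * x * qinv b) ` U \<subseteq> {x \<in> Zring (2*n). nr x = 1}"
    using conjugate_stabilizer_in_norm_one[OF b] assms(7) by blast
  moreover have "U \<subseteq> carrier unitq" using assms(7) by auto
  moreover have "Q4 n = unitq\<lparr>carrier := {x \<in> Zring (2*n). nr x = 1}\<rparr>"
    using norm_one_group_Zring[of n] assms(1) by (simp add: norm_one_group_def)
  ultimately have "\<exists>H. subgroup H (Q4 n) \<and> unitq\<lparr>carrier := generate unitq U\<rparr> \<cong> (Q4 n)\<lparr>carrier := H\<rparr>"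
    using generate_embeds_by_conjugation[OF b(2) _ subgroup_norm_one_Zring[OF d]] by simp
  then show False using assms(8) by contradiction
qed

end
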